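(* Let $h=u+v+u^{-1}+v^{-1}+u^{-1}v^{-1}\in A=\mathbb C\langle u^{\pm1},v^{\pm1}\rangle$. For all integers $N,M>0$, $\{h^N,h^M\}_K\in[A,A]$, i.e. $\{h^N,h^M\}_K\equiv0\bmod[A,A]$.
   Context: $A$ is the group algebra over $\mathbb C$ of the free group on $u,v$. $[A,A]$ is the linear span of all $ab-ba$, $a,b\in A$. $\mu:A\otimes A\to A$, $\mu(a\otimes b)=ab$; $A\otimes A$ has componentwise multiplication. The double bracket $\llbracket\cdot\rrbracket_K:A\otimes A\to A\otimes A$ is the linear map with $\llbracket u\otimes v\rrbracket_K=-vu\otimes1$, $\llbracket v\otimes u\rrbracket_K=uv\otimes1$, $\llbracket u\otimes u\rrbracket_K=\llbracket v\otimes v\rrbracket_K=0$, extended by the Leibniz rules $\llbracket a\otimes bc\rrbracket_K=\llbracket a\otimes b\rrbracket_K(1\otimes c)+(b\otimes1)\llbracket a\otimes c\rrbracket_K$ and $\llbracket ab\otimes c\rrbracket_K=\llbracket a\otimes c\rrbracket_K(b\otimes1)+(1\otimes a)\llbracket b\otimes c\rrbracket_K$ (so for monomials $a=a_1\cdots a_k$, $b=b_1\cdots b_m$ in letters $u^{\pm1},v^{\pm1}$, with $\llbracket a_i\otimes b_j\rrbracket_K=x_{ij}\otimes y_{ij}$, $\llbracket a\otimes b\rrbracket_K=\sum_{i,j}(b_1\cdots b_{j-1}x_{ij}a_{i+1}\cdots a_k)\otimes(a_1\cdots a_{i-1}y_{ij}b_{j+1}\cdots b_m)$; the values on inverse letters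 are those forced by the Leibniz rules, e.g. $\llbracket u^{-1}\otimes v^{-1}\rrbracket_K=-1\otimes u^{-1}v^{-1}$, $\llbracket u^{-1}\otimes v\rrbracket_K=v\otimes u^{-1}$, $\llbracket u\otimes v^{-1}\rrbracket_K=u\otimes v^{-1}$, $\llbracket v^{-1}\otimes u^{-1}\rrbracket_K=1\otimes v^{-1}u^{-1}$, $\llbracket v\otimes u^{-1}\rrbracket_K=-v\otimes u^{-1}$, $\llbracket v^{-1}\otimes u\rrbracket_K=-u\otimes v^{-1}$). The bracket is $\{a,b\}_K=\mu(\llbracket a\otimes b\rrbracket_K)$. *)

theory Defs
  imports Complex_Main "HOL-Library.Poly_Mapping"
begin

datatype letter = U | V | Ui | Vi

fun linv :: "letter \<Rightarrow> letter" where
  "linv U = Ui" | "linv V = Vi" | "linv Ui = U" | "linv Vi = V"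

lemma linv_linv [simp]: "linv (linv x) = x"
  by (cases x) auto

fun push :: "letter \<Rightarrow> letter list \<Rightarrow> letter list" where
  "push x [] = [x]"
| "push x (y # ys) = (if y = linv x then ys else x # y # ys)"

definition reduce :: "letter list \<Rightarrow> letter list" where
  "reduce w = foldr push w []"

fun is_reduced :: "letter list \<Rightarrow> bool" where
  "is_reduced [] = True"
| "is_reduced [x] = True"
| "is_reduced (x # y # ys) = (y \<noteq> linv x \<and> is_reduced (y # ys))"

lemma is_reduced_tl: "is_reduced (x # ys) \<Longrightarrow> is_reduced ys"
  by (cases ys) auto

lemma push_reduced: "is_reduced w \<Longrightarrow> is_reduced (push x w)"
  by (cases w) (auto dest: is_reduced_tl)

lemma foldr_push_reduced: "is_reduced r \<Longrightarrow> is_reduced (foldr push w r)"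
  by (induction w) (auto intro: push_reduced)

lemma reduce_reduced: "is_reduced (reduce w)"
  unfolding reduce_def by (rule foldr_push_reduced) simp

lemma push_push_linv: "is_reduced s \<Longrightarrow> push a (push (linv a) s) = s"
proof (cases s)
  case (Cons z zs)
  assume r: "is_reduced s"
  show ?thesis
  proof (cases "z = a")
    case True
    then show ?thesis using Cons r by (cases zs) auto
  next
    case False
    then show ?thesis using Cons by auto
  qed
qed simp

lemma foldr_push_reduced_id: "is_reduced w \<Longrightarrow> foldr push w [] = w"
proof (induction w rule: is_reduced.induct)
  case (3 x y ys)
  then show ?case by auto
qed auto

lemma reduce_id: "is_reduced w \<Longrightarrow> reduce w = w"
  by (simp add: reduce_def foldr_push_reduced_id)

lemma foldr_push_push:
  assumes "is_reduced l" "is_reduced r"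
  shows "foldr push (push a l) r = push a (foldr push l r)"
proof (cases l)
  case Nil then show ?thesis by simp
next
  case (Cons y ys)
  show ?thesis
  proof (cases "y = linv a")
    case True
    have "is_reduced (foldr push ys r)"
      using assms Cons by (intro foldr_push_reduced) auto
    then have "push a (push (linv a) (foldr push ys r)) = foldr push ys r"
      by (rule push_push_linv)
    then show ?thesis using Cons True by simp
  next
    case False
    then show ?thesis using Cons by simp
  qed
qed

lemma foldr_push_foldr:
  assumes "is_reduced l" "is_reduced r"
  shows "foldr push (foldr push x l) r = foldr push x (foldr push l r)"
  using assms
proof (induction x)
  case (Cons a x)
  have "foldr push (push a (foldr push x l)) r = push a (foldr push (foldr push x l) r)"
    using Cons.prems by (intro foldr_push_push foldr_push_reduced) auto
  then show ?case using Cons by simp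
qed simp

lemma reduce_append: "reduce (x @ y) = foldr push x (reduce y)"
  by (simp add: reduce_def)

typedef fg = "{w. is_reduced w}"
  by (rule exI[of _ "[]"]) simp

text \<open>The group operation of the free group (written additively so that the
  library group algebra fg =>0 complex applies; it is NOT commutative).\<close>
instantiation fg :: monoid_add
begin

definition zero_fg :: fg where "zero_fg = Abs_fg []"

definition plus_fg :: "fg \<Rightarrow> fg \<Rightarrow> fg" where
  "plus_fg a b = Abs_fg (reduce (Rep_fg a @ Rep_fg b))"

instance
proof
  fix a b c :: fg
  have ra: "is_reduced (Rep_fg a)" and rb: "is_reduced (Rep_fg b)" and rc: "is_reduced (Rep_fg c)"
    using Rep_fg by auto
  show "a + b + c = a + (b + c)"
    unfolding plus_fg_def
    using ra rb rc
    by (simp add: Abs_fg_inverse reduce_reduced reduce_append reduce_id foldr_push_foldr foldr_push_reduced)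
  show "0 + a = a"
    unfolding plus_fg_def zero_fg_def
    using ra by (simp add: Abs_fg_inverse reduce_id Rep_fg_inverse)
  show "a + 0 = a"
    unfolding plus_fg_def zero_fg_def
    using ra by (simp add: Abs_fg_inverse reduce_id Rep_fg_inverse)
qed

end

definition fgw :: "letter list \<Rightarrow> fg" where
  "fgw w = Abs_fg (reduce w)"

section \<open>The group algebra A = C[F(u,v)]\<close>

type_synonym galg = "fg \<Rightarrow>\<^sub>0 complex"

definition mono :: "letter list \<Rightarrow> galg" where
  "mono w = Poly_Mapping.single (fgw w) 1"

definition hK :: galg where
  "hK = mono [U] + mono [V] + mono [Ui] + mono [Vi] + mono [Ui, Vi]"

text \<open>The commutator subspace [A,A]: complex-linear span of all ab - ba.
  (Scalar multiplication by c is multiplication by the central element c\<cdot>1.)\<close>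
inductive_set comm_space :: "galg set" where
  zero: "0 \<in> comm_space"
| comm: "a * b - b * a \<in> comm_space"
| add: "x \<in> comm_space \<Longrightarrow> y \<in> comm_space \<Longrightarrow> x + y \<in> comm_space"
| smult: "x \<in> comm_space \<Longrightarrow> Poly_Mapping.single 0 c * x \<in> comm_space"

text \<open>A \<otimes> A is the free vector space on pairs of group elements.\<close>
type_synonym gtens = "(fg \<times> fg) \<Rightarrow>\<^sub>0 complex"

text \<open>Values on letters: lbr a b = (c, x, y) means double bracket of a,b is c \<cdot> x \<otimes> y.\<close>
fun lbr :: "letter \<Rightarrow> letter \<Rightarrow> complex \<times> letter list \<times> letter list" where
  "lbr U V = (-1, [V, U], [])"
| "lbr V U = (1, [U, V], [])"
| "lbr Ui Vi = (-1, [], [Ui, Vi])"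
| "lbr Ui V = (1, [V], [Ui])"
| "lbr U Vi = (1, [U], [Vi])"
| "lbr Vi Ui = (1, [], [Vi, Ui])"
| "lbr V Ui = (-1, [V], [Ui])"
| "lbr Vi U = (-1, [U], [Vi])"
| "lbr _ _ = (0, [], [])"

definition dbr_word :: "complex \<Rightarrow> letter list \<Rightarrow> letter list \<Rightarrow> gtens" where
  "dbr_word s a b =
     (\<Sum>i<length a. \<Sum>j<length b.
        (case lbr (a ! i) (b ! j) of (c, x, y) \<Rightarrow>
           Poly_Mapping.single
             (fgw (take j b @ x @ drop (Suc i) a), fgw (take i a @ y @ drop (Suc j) b))
             (s * c)))"

definition dbrK :: "galg \<Rightarrow> galg \<Rightarrow> gtens" where
  "dbrK f g = (\<Sum>p\<in>Poly_Mapping.keys f. \<Sum>q\<in>Poly_Mapping.keys g.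
                 dbr_word (Poly_Mapping.lookup f p * Poly_Mapping.lookup g q) (Rep_fg p) (Rep_fg q))"

definition muK :: "gtens \<Rightarrow> galg" where
  "muK T = (\<Sum>pq\<in>Poly_Mapping.keys T. Poly_Mapping.single (fst pq + snd pq) (Poly_Mapping.lookup T pq))"

definition brK :: "galg \<Rightarrow> galg \<Rightarrow> galg" where
  "brK f g = muK (dbrK f g)"

end

theory Submission
  imports Defs
begin

text \<open>
  Modulo \<open>[A,A]\<close> the bracket only sees cyclic words, so it is convenient to work with a bracket
  \<open>ibr f P g Q\<close> in which two further elements \<open>P\<close>, \<open>Q\<close> are inserted at the places where the
  cyclic words of \<open>f\<close> and \<open>g\<close> close up; \<open>{f,g}\<^sub>K \<equiv> ibr f 1 g 1\<close>. This bracket obeys a Leibniz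
  rule in each argument modulo \<open>[A,A]\<close>, the product being absorbed into the inserted elements.
  Expanding \<open>h\<^sup>N\<close> and \<open>h\<^sup>M\<close> therefore writes \<open>{h\<^sup>N,h\<^sup>M}\<^sub>K\<close> as a sum of terms
  \<open>ibr h h\<^sup>k h h\<^sup>m\<close>, and a direct computation with the five monomials of \<open>h\<close> shows that each of
  them is congruent to the commutator \<open>[h, W h\<^sup>k\<^sup>+\<^sup>m]\<close> with \<open>W = v + u\<^sup>-\<^sup>1 + u\<^sup>-\<^sup>1v\<^sup>-\<^sup>1\<close>.
\<close>

lemma Rep_fg_fgw: "Rep_fg (fgw w) = reduce w"
  by (simp add: fgw_def Abs_fg_inverse reduce_reduced)

lemma fgw_Rep_fg: "fgw (Rep_fg p) = p"
  using Rep_fg[of p] by (simp add: fgw_def reduce_id Rep_fg_inverse)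

lemma Rep_fg_plus: "Rep_fg (p + q) = reduce (Rep_fg p @ Rep_fg q)"
  by (simp add: plus_fg_def Abs_fg_inverse reduce_reduced)

lemma reduce_Cons: "reduce (x # w) = push x (reduce w)"
  by (simp add: reduce_def)

lemma reduce_append_reduce: "reduce (reduce a @ reduce b) = reduce (a @ b)"
proof -
  have "reduce (reduce a @ reduce b) = foldr push (foldr push a []) (reduce b)"
    by (simp add: reduce_append reduce_id reduce_reduced reduce_def[of a])
  also have "\<dots> = foldr push a (foldr push [] (reduce b))"
    by (rule foldr_push_foldr) (auto simp: reduce_reduced)
  finally show ?thesis by (simp add: reduce_append)
qed

lemma fgw_append: "fgw (a @ b) = fgw a + fgw b"
  unfolding plus_fg_def Rep_fg_fgw by (simp add: fgw_def reduce_append_reduce)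

lemma fgw_Nil: "fgw [] = 0"
  by (simp add: fgw_def zero_fg_def reduce_def)

lemma mono_append: "mono (a @ b) = mono a * mono b"
  by (simp add: mono_def mult_single fgw_append)

lemma mono_Nil: "mono [] = 1"
  by (simp add: mono_def fgw_Nil)

lemma mono_reduce: "mono (reduce w) = mono w"
  by (simp add: mono_def fgw_def reduce_id reduce_reduced)

lemma mono_Rep_fg: "mono (Rep_fg p) = Poly_Mapping.single p 1"
  by (simp add: mono_def fgw_Rep_fg)

text \<open>A separate name for one-letter monomials keeps \<open>mono_Cons\<close> from looping in the simplifier.\<close>

definition mono_letter :: "letter \<Rightarrow> galg" where
  "mono_letter x = mono [x]"

lemma mono_Cons: "mono (a # w) = mono_letter a * mono w"
  using mono_append[of "[a]" w] by (simp add: mono_letter_def)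

lemma mono_letter_linv: "mono_letter x * mono_letter (linv x) = 1"
proof -
  have "mono_letter x * mono_letter (linv x) = mono (reduce [x, linv x])"
    by (simp add: mono_reduce mono_Cons mono_Nil)
  also have "reduce [x, linv x] = []" by (simp add: reduce_def)
  finally show ?thesis by (simp add: mono_Nil)
qed

lemma mono_letter_linv_left: "mono_letter x * (mono_letter (linv x) * Z) = Z"
  by (simp add: mult.assoc[symmetric] mono_letter_linv)

lemma mono_linv_pair: "mono [x, linv x] = 1"
  by (simp add: mono_Cons mono_Nil mono_letter_linv)

lemmas mono_simps = mono_Cons mono_Nil mono_append mult.assoc
  mono_letter_linv[of U, simplified] mono_letter_linv[of V, simplified]
  mono_letter_linv[of Ui, simplified] mono_letter_linv[of Vi, simplified]
  mono_letter_linv_left[of U, simplified] mono_letter_linv_left[of V, simplified]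
  mono_letter_linv_left[of Ui, simplified] mono_letter_linv_left[of Vi, simplified]
  single_uminus single_one

abbreviation scalar :: "complex \<Rightarrow> galg" where
  "scalar c \<equiv> Poly_Mapping.single 0 c"

lemma poly_mapping_sum_single:
  "(f :: 'a \<Rightarrow>\<^sub>0 complex) = (\<Sum>p\<in>Poly_Mapping.keys f. Poly_Mapping.single p (Poly_Mapping.lookup f p))"
  by (rule poly_mapping_eqI)
    (auto simp: lookup_sum lookup_single when_def in_keys_iff intro!: sum.neutral)

lemma scalar_commute: "scalar c * f = f * scalar c"
proof -
  have "scalar c * (\<Sum>p\<in>Poly_Mapping.keys f. Poly_Mapping.single p (Poly_Mapping.lookup f p))
     = (\<Sum>p\<in>Poly_Mapping.keys f. Poly_Mapping.single p (Poly_Mapping.lookup f p)) * scalar c"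
    by (simp add: sum_distrib_left sum_distrib_right mult_single mult.commute)
  then show ?thesis by (simp only: poly_mapping_sum_single[symmetric])
qed

lemma mult_scalar_left_commute: "X * (scalar c * Z) = scalar c * (X * Z)"
  by (metis mult.assoc scalar_commute)

lemma scalar_mult: "scalar (s * c) * Z = scalar s * (scalar c * Z)"
  by (simp add: mult.assoc[symmetric] mult_single)

lemma scalar_left_commute: "scalar s * (scalar c * Z) = scalar c * (scalar s * Z)"
  by (simp add: scalar_mult[symmetric] mult.commute)

lemma comm_space_uminus: "x \<in> comm_space \<Longrightarrow> - x \<in> comm_space"
  using comm_space.smult[of x "-1"] by (simp add: single_uminus)

lemma comm_space_sum: "(\<And>i. i \<in> I \<Longrightarrow> f i \<in> comm_space) \<Longrightarrow> sum f I \<in> comm_space"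
  by (induction I rule: infinite_finite_induct) (auto intro: comm_space.intros)

definition cong_comm :: "galg \<Rightarrow> galg \<Rightarrow> bool" (infix "\<approx>" 50) where
  "x \<approx> y \<longleftrightarrow> x - y \<in> comm_space"

lemma cong_comm_refl [simp]: "x \<approx> x"
  by (simp add: cong_comm_def comm_space.zero)

lemma cong_comm_sym: "x \<approx> y \<Longrightarrow> y \<approx> x"
  unfolding cong_comm_def using comm_space_uminus[of "x - y"] by simp

lemma cong_comm_trans [trans]: "x \<approx> y \<Longrightarrow> y \<approx> z \<Longrightarrow> x \<approx> z"
  unfolding cong_comm_def using comm_space.add[of "x - y" "y - z"] by simp

lemma cong_comm_add: "x \<approx> y \<Longrightarrow> x' \<approx> y' \<Longrightarrow> x + x' \<approx> y + y'"
  unfolding cong_comm_def using comm_space.add[of "x - y" "x' - y'"] by (simp add: algebra_simps)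

lemma cong_comm_uminus: "x \<approx> y \<Longrightarrow> - x \<approx> - y"
  unfolding cong_comm_def using comm_space_uminus[of "x - y"] by simp

lemma cong_comm_scalar: "x \<approx> y \<Longrightarrow> scalar c * x \<approx> scalar c * y"
  unfolding cong_comm_def using comm_space.smult[of "x - y" c] by (simp add: right_diff_distrib)

lemma cong_comm_sum: "(\<And>i. i \<in> I \<Longrightarrow> f i \<approx> g i) \<Longrightarrow> sum f I \<approx> sum g I"
  unfolding cong_comm_def using comm_space_sum[of I "\<lambda>i. f i - g i"] by (simp add: sum_subtractf)

lemma mult_cong_comm_commute: "a * b \<approx> b * a"
  by (simp add: cong_comm_def comm_space.comm)

lemma comm_space_cong_comm: "x \<approx> y \<Longrightarrow> y \<in> comm_space \<Longrightarrow> x \<in> comm_space"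
  unfolding cong_comm_def using comm_space.add[of "x - y" y] by simp

definition is_linear :: "(galg \<Rightarrow> galg) \<Rightarrow> bool" where
  "is_linear F \<longleftrightarrow> (\<forall>P1 P2. F (P1 + P2) = F P1 + F P2) \<and> (\<forall>c P. F (scalar c * P) = scalar c * F P)"

lemma is_linear_add: "is_linear F \<Longrightarrow> F (P1 + P2) = F P1 + F P2"
  by (simp add: is_linear_def)

lemma is_linear_scalar: "is_linear F \<Longrightarrow> F (scalar c * P) = scalar c * F P"
  by (simp add: is_linear_def)

lemma is_linear_sum: "is_linear F \<Longrightarrow> F (sum G I) = (\<Sum>i\<in>I. F (G i))"
proof (induction I rule: infinite_finite_induct)
  case (infinite I)
  then show ?case using is_linear_scalar[of F 0 0] by simp
next
  case empty
  then show ?case using is_linear_scalar[of F 0 0] by simp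
qed (simp add: is_linear_add)

lemma is_linear_mult: "is_linear (\<lambda>X. A * X * B)"
  unfolding is_linear_def by (simp add: algebra_simps mult_scalar_left_commute)

lemma is_linear_sum_fun: "(\<And>i. is_linear (F i)) \<Longrightarrow> is_linear (\<lambda>P. \<Sum>i\<in>I. F i P)"
  unfolding is_linear_def by (simp add: sum.distrib sum_distrib_left)

definition lift :: "(fg \<Rightarrow> galg) \<Rightarrow> galg \<Rightarrow> galg" where
  "lift G f = (\<Sum>p\<in>Poly_Mapping.keys f. scalar (Poly_Mapping.lookup f p) * G p)"

lemma lift_superset:
  "finite S \<Longrightarrow> Poly_Mapping.keys f \<subseteq> S \<Longrightarrow>
   lift G f = (\<Sum>p\<in>S. scalar (Poly_Mapping.lookup f p) * G p)"
  unfolding lift_def by (rule sum.mono_neutral_left) (auto simp: in_keys_iff)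

lemma lift_add: "lift G (f + g) = lift G f + lift G g"
proof -
  let ?S = "Poly_Mapping.keys f \<union> Poly_Mapping.keys g"
  have "lift G (f + g) = (\<Sum>p\<in>?S. scalar (Poly_Mapping.lookup (f + g) p) * G p)"
    by (rule lift_superset) (auto simp: keys_add)
  also have "\<dots> = (\<Sum>p\<in>?S. scalar (Poly_Mapping.lookup f p) * G p)
      + (\<Sum>p\<in>?S. scalar (Poly_Mapping.lookup g p) * G p)"
    by (simp add: lookup_add single_add distrib_right sum.distrib)
  also have "\<dots> = lift G f + lift G g"
    by (subst (1 2) lift_superset[of ?S]) auto
  finally show ?thesis .
qed

lemma lift_zero [simp]: "lift G 0 = 0"
  by (simp add: lift_def)

lemma lift_sum: "lift G (sum f I) = (\<Sum>i\<in>I. lift G (f i))"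
  by (induction I rule: infinite_finite_induct) (auto simp: lift_add)

lemma lift_single: "lift G (Poly_Mapping.single p c) = scalar c * G p"
  by (cases "c = 0") (simp_all add: lift_def)

lemma lift_fun_add: "lift (\<lambda>p. G p + G' p) f = lift G f + lift G' f"
  by (simp add: lift_def distrib_left sum.distrib)

lemma lift_cong_comm: "(\<And>p. G p \<approx> G' p) \<Longrightarrow> lift G f \<approx> lift G' f"
  unfolding lift_def by (intro cong_comm_sum cong_comm_scalar) auto

lemma is_linear_lift: "(\<And>q. is_linear (G q)) \<Longrightarrow> is_linear (\<lambda>P. lift (\<lambda>q. G q P) f)"
  unfolding is_linear_def lift_def
  by (auto simp: distrib_left sum.distrib sum_distrib_left scalar_left_commute)

lemma lift_mult:
  "lift G (f1 * f2) = (\<Sum>p\<in>Poly_Mapping.keys f1. \<Sum>q\<in>Poly_Mapping.keys f2.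
     scalar (Poly_Mapping.lookup f1 p * Poly_Mapping.lookup f2 q) * G (p + q))"
proof -
  have "f1 * f2 = (\<Sum>p\<in>Poly_Mapping.keys f1. Poly_Mapping.single p (Poly_Mapping.lookup f1 p)) *
     (\<Sum>q\<in>Poly_Mapping.keys f2. Poly_Mapping.single q (Poly_Mapping.lookup f2 q))"
    by (simp only: poly_mapping_sum_single[symmetric])
  also have "\<dots> = (\<Sum>p\<in>Poly_Mapping.keys f1. \<Sum>q\<in>Poly_Mapping.keys f2.
     Poly_Mapping.single (p + q) (Poly_Mapping.lookup f1 p * Poly_Mapping.lookup f2 q))"
    by (simp add: sum_product mult_single)
  finally show ?thesis by (simp add: lift_sum lift_single)
qed

lemma sum_single_mult:
  "f * X = (\<Sum>q\<in>Poly_Mapping.keys f. scalar (Poly_Mapping.lookup f q) * (Poly_Mapping.single q 1 * X))"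
proof -
  have "f * X = (\<Sum>q\<in>Poly_Mapping.keys f. Poly_Mapping.single q (Poly_Mapping.lookup f q)) * X"
    by (simp only: poly_mapping_sum_single[symmetric])
  then show ?thesis
    by (simp add: sum_distrib_right mult.assoc[symmetric] mult_single)
qed

lemma mult_sum_single:
  "X * f = (\<Sum>q\<in>Poly_Mapping.keys f. scalar (Poly_Mapping.lookup f q) * (X * Poly_Mapping.single q 1))"
proof -
  have "X * f = (\<Sum>q\<in>Poly_Mapping.keys f. X * (scalar (Poly_Mapping.lookup f q) * Poly_Mapping.single q 1))"
    by (subst poly_mapping_sum_single) (simp add: sum_distrib_left mult_single)
  then show ?thesis by (simp add: mult_scalar_left_commute)
qed

lemma lift_mult_leibniz:
  assumes split: "\<And>p q. G (p + q) \<approx> A p (Poly_Mapping.single q 1 * X) + B q (X * Poly_Mapping.single p 1)"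
    and linA: "\<And>p. is_linear (A p)" and linB: "\<And>q. is_linear (B q)"
  shows "lift G (f1 * f2) \<approx> lift (\<lambda>p. A p (f2 * X)) f1 + lift (\<lambda>q. B q (X * f1)) f2"
proof -
  let ?c = "\<lambda>p q. scalar (Poly_Mapping.lookup f1 p * Poly_Mapping.lookup f2 q)"
  have A: "(\<Sum>p\<in>Poly_Mapping.keys f1. \<Sum>q\<in>Poly_Mapping.keys f2.
      ?c p q * A p (Poly_Mapping.single q 1 * X)) = lift (\<lambda>p. A p (f2 * X)) f1"
    unfolding lift_def sum_single_mult[of f2 X] is_linear_sum[OF linA] is_linear_scalar[OF linA]
    by (simp add: sum_distrib_left scalar_mult)
  have B: "(\<Sum>p\<in>Poly_Mapping.keys f1. \<Sum>q\<in>Poly_Mapping.keys f2.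
      ?c p q * B q (X * Poly_Mapping.single p 1)) = lift (\<lambda>q. B q (X * f1)) f2"
    unfolding lift_def mult_sum_single[of X f1] is_linear_sum[OF linB] is_linear_scalar[OF linB]
    by (subst sum.swap) (simp add: sum_distrib_left scalar_mult scalar_left_commute)
  have "lift G (f1 * f2) \<approx> (\<Sum>p\<in>Poly_Mapping.keys f1. \<Sum>q\<in>Poly_Mapping.keys f2.
      ?c p q * (A p (Poly_Mapping.single q 1 * X) + B q (X * Poly_Mapping.single p 1)))"
    unfolding lift_mult by (intro cong_comm_sum cong_comm_scalar split)
  also have "\<dots> = lift (\<lambda>p. A p (f2 * X)) f1 + lift (\<lambda>q. B q (X * f1)) f2"
    by (simp add: distrib_left sum.distrib A B)
  finally show ?thesis .
qed

lemma leibniz_power_comm_space: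
  fixes F :: "galg \<Rightarrow> galg \<Rightarrow> galg"
  assumes leibniz: "\<And>f1 f2 P. F (f1 * f2) P \<approx> F f1 (f2 * P) + F f2 (P * f1)"
    and base: "\<And>k. F H (H ^ k) \<in> comm_space"
  shows "0 < N \<Longrightarrow> F (H ^ N) (H ^ m) \<in> comm_space"
proof (induction N arbitrary: m)
  case (Suc n)
  show ?case
  proof (cases "n = 0")
    case False
    have "F (H ^ Suc n) (H ^ m) \<approx> F H (H ^ n * H ^ m) + F (H ^ n) (H ^ m * H)"
      unfolding power_Suc by (rule leibniz)
    also have "\<dots> = F H (H ^ (n + m)) + F (H ^ n) (H ^ Suc m)"
      by (simp only: power_add power_Suc2)
    finally show ?thesis
      using Suc.IH[of "Suc m"] base[of "n + m"] False by (auto intro: comm_space_cong_comm comm_space.add)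
  qed (use base in simp)
qed simp

section \<open>The bracket with insertions\<close>

text \<open>
  For \<open>\<lbrakk>a\<^sub>i \<otimes> b\<^sub>j\<rbrakk>\<^sub>K = s x \<otimes> y\<close> the summand \<open>b\<^sub><\<^sub>j x a\<^sub>>\<^sub>i a\<^sub><\<^sub>i y b\<^sub>>\<^sub>j\<close> of \<open>{a,b}\<^sub>K\<close> is read cyclically from
  \<open>x\<close>; \<open>P\<close> is inserted where the word \<open>a\<close> closes up and \<open>Q\<close> where \<open>b\<close> closes up.
\<close>

definition ibr_term :: "letter list \<Rightarrow> nat \<Rightarrow> letter list \<Rightarrow> nat \<Rightarrow> galg \<Rightarrow> galg \<Rightarrow> galg" where
  "ibr_term a i b j P Q = (case lbr (a ! i) (b ! j) of (s, x, y) \<Rightarrow>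
     scalar s * mono (x @ drop (Suc i) a) * P * mono (take i a @ y @ drop (Suc j) b) * Q * mono (take j b))"

definition ibr_word :: "letter list \<Rightarrow> galg \<Rightarrow> letter list \<Rightarrow> galg \<Rightarrow> galg" where
  "ibr_word a P b Q = (\<Sum>i<length a. \<Sum>j<length b. ibr_term a i b j P Q)"

lemma sum_lessThan_add: "(\<Sum>i<(m::nat) + n. f i) = (\<Sum>i<m. f i) + (\<Sum>i<n. f (m + i))"
  by (induction n) (simp_all add: add.assoc)

lemma ibr_word_append_left:
  "ibr_word (a1 @ a2) P b Q = ibr_word a1 (mono a2 * P) b Q + ibr_word a2 (P * mono a1) b Q"
proof -
  have "i < length a1 \<Longrightarrow> ibr_term (a1 @ a2) i b j P Q = ibr_term a1 i b j (mono a2 * P) Q" for i j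
    unfolding ibr_term_def
    by (cases "lbr (a1 ! i) (b ! j)") (simp add: nth_append mono_append mult.assoc)
  moreover have "ibr_term (a1 @ a2) (length a1 + i) b j P Q = ibr_term a2 i b j (P * mono a1) Q" for i j
    unfolding ibr_term_def
    by (cases "lbr (a2 ! i) (b ! j)") (simp add: mono_append mult.assoc)
  ultimately show ?thesis
    unfolding ibr_word_def by (simp add: sum_lessThan_add)
qed

lemma ibr_word_append_right:
  "ibr_word a P (b1 @ b2) Q = ibr_word a P b1 (mono b2 * Q) + ibr_word a P b2 (Q * mono b1)"
proof -
  have "j < length b1 \<Longrightarrow> ibr_term a i (b1 @ b2) j P Q = ibr_term a i b1 j P (mono b2 * Q)" for i j
    unfolding ibr_term_def
    by (cases "lbr (a ! i) (b1 ! j)") (simp add: nth_append mono_append mult.assoc)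
  moreover have "ibr_term a i (b1 @ b2) (length b1 + j) P Q = ibr_term a i b2 j P (Q * mono b1)" for i j
    unfolding ibr_term_def
    by (cases "lbr (a ! i) (b2 ! j)") (simp add: mono_append mult.assoc)
  ultimately show ?thesis
    unfolding ibr_word_def by (simp add: sum_lessThan_add sum.distrib)
qed

lemma is_linear_ibr_word_P: "is_linear (\<lambda>P. ibr_word a P b Q)"
  unfolding ibr_word_def
proof (intro is_linear_sum_fun)
  fix i j
  obtain s x y where "lbr (a ! i) (b ! j) = (s, x, y)" by (cases "lbr (a ! i) (b ! j)")
  then show "is_linear (\<lambda>P. ibr_term a i b j P Q)"
    using is_linear_mult[of "scalar s * mono (x @ drop (Suc i) a)"
        "mono (take i a @ y @ drop (Suc j) b) * Q * mono (take j b)"]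
    by (simp add: ibr_term_def mult.assoc)
qed

lemma is_linear_ibr_word_Q: "is_linear (\<lambda>Q. ibr_word a P b Q)"
  unfolding ibr_word_def
proof (intro is_linear_sum_fun)
  fix i j
  obtain s x y where "lbr (a ! i) (b ! j) = (s, x, y)" by (cases "lbr (a ! i) (b ! j)")
  then show "is_linear (\<lambda>Q. ibr_term a i b j P Q)"
    using is_linear_mult[of "scalar s * mono (x @ drop (Suc i) a) * P * mono (take i a @ y @ drop (Suc j) b)"
        "mono (take j b)"]
    by (simp add: ibr_term_def)
qed

lemma ibr_word_cancel_left: "ibr_word [c, linv c] P b Q = 0"
proof -
  have "ibr_term [c, linv c] 0 b j P Q + ibr_term [c, linv c] 1 b j P Q = 0" for j
    unfolding ibr_term_def by (cases c; cases "b ! j") (simp_all add: mono_simps)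
  then show ?thesis
    by (simp add: ibr_word_def numeral_2_eq_2 sum.distrib[symmetric])
qed

lemma ibr_word_push_left: "ibr_word (push x r) P b Q = ibr_word (x # r) P b Q"
proof (cases r)
  case (Cons y r')
  show ?thesis
  proof (cases "y = linv x")
    case True
    then have "ibr_word (x # r) P b Q = ibr_word ([x, linv x] @ r') P b Q" using Cons by simp
    also have "\<dots> = ibr_word r' P b Q"
      by (simp only: ibr_word_append_left ibr_word_cancel_left mono_linv_pair) simp
    finally show ?thesis using Cons True by simp
  qed (simp add: Cons)
qed simp

lemma ibr_word_reduce_left: "ibr_word (reduce w) P b Q = ibr_word w P b Q"
proof (induction w arbitrary: P)
  case Nil then show ?case by (simp add: reduce_def)
next
  case (Cons x w)
  have "ibr_word (x # w) P b Q = ibr_word [x] (mono w * P) b Q + ibr_word w (P * mono [x]) b Q"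
    using ibr_word_append_left[of "[x]" w] by simp
  also have "\<dots> = ibr_word [x] (mono (reduce w) * P) b Q + ibr_word (reduce w) (P * mono [x]) b Q"
    by (simp add: mono_reduce Cons.IH)
  also have "\<dots> = ibr_word (x # reduce w) P b Q"
    using ibr_word_append_left[of "[x]" "reduce w"] by simp
  finally show ?case by (simp add: reduce_Cons ibr_word_push_left)
qed

lemma ibr_term_cancel_right: "ibr_term a i [d, linv d] 0 P Q + ibr_term a i [d, linv d] 1 P Q \<approx> 0"
proof -
  obtain s x y where l: "lbr (a ! i) (linv d) = (s, x, y)" by (cases "lbr (a ! i) (linv d)")
  let ?T = "scalar s * mono (x @ drop (Suc i) a) * P * mono (take i a @ y) * Q"
  have "ibr_term a i [d, linv d] 1 P Q \<approx> mono [d] * ?T"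
    using l mult_cong_comm_commute[of ?T "mono [d]"] by (simp add: ibr_term_def)
  then have "ibr_term a i [d, linv d] 0 P Q + ibr_term a i [d, linv d] 1 P Q
      \<approx> ibr_term a i [d, linv d] 0 P Q + mono [d] * ?T"
    by (intro cong_comm_add cong_comm_refl)
  also have "ibr_term a i [d, linv d] 0 P Q + mono [d] * ?T = 0"
    using l unfolding ibr_term_def by (cases "a ! i"; cases d) (auto simp: mono_simps)
  finally show ?thesis .
qed

lemma ibr_word_cancel_right: "ibr_word a P [d, linv d] Q \<approx> 0"
proof -
  have "ibr_word a P [d, linv d] Q =
      (\<Sum>i<length a. ibr_term a i [d, linv d] 0 P Q + ibr_term a i [d, linv d] 1 P Q)"
    by (simp add: ibr_word_def numeral_2_eq_2)
  also have "\<dots> \<approx> (\<Sum>i<length a. 0)"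
    by (intro cong_comm_sum ibr_term_cancel_right)
  finally show ?thesis by simp
qed

lemma ibr_word_push_right: "ibr_word a P (push x r) Q \<approx> ibr_word a P (x # r) Q"
proof (cases r)
  case (Cons y r')
  show ?thesis
  proof (cases "y = linv x")
    case True
    then have "ibr_word a P (x # r) Q = ibr_word a P ([x, linv x] @ r') Q" using Cons by simp
    also have "\<dots> = ibr_word a P [x, linv x] (mono r' * Q) + ibr_word a P r' Q"
      by (simp only: ibr_word_append_right mono_linv_pair) simp
    also have "\<dots> \<approx> 0 + ibr_word a P r' Q"
      by (intro cong_comm_add ibr_word_cancel_right cong_comm_refl)
    finally show ?thesis using Cons True by (simp add: cong_comm_sym)
  qed (simp add: Cons)
qed simp

lemma ibr_word_reduce_right: "ibr_word a P w Q \<approx> ibr_word a P (reduce w) Q"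
proof (induction w arbitrary: Q)
  case Nil then show ?case by (simp add: reduce_def)
next
  case (Cons x w)
  have "ibr_word a P (x # w) Q = ibr_word a P [x] (mono w * Q) + ibr_word a P w (Q * mono [x])"
    using ibr_word_append_right[of a P "[x]" w] by simp
  also have "\<dots> \<approx> ibr_word a P [x] (mono (reduce w) * Q) + ibr_word a P (reduce w) (Q * mono [x])"
    by (simp add: mono_reduce cong_comm_add Cons.IH)
  also have "\<dots> = ibr_word a P (x # reduce w) Q"
    using ibr_word_append_right[of a P "[x]" "reduce w"] by simp
  also have "\<dots> \<approx> ibr_word a P (reduce (x # w)) Q"
    by (simp add: reduce_Cons ibr_word_push_right cong_comm_sym)
  finally show ?case .
qed

definition ibr_left_word :: "letter list \<Rightarrow> galg \<Rightarrow> galg \<Rightarrow> galg \<Rightarrow> galg" where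
  "ibr_left_word a P g Q = lift (\<lambda>q. ibr_word a P (Rep_fg q) Q) g"

definition ibr :: "galg \<Rightarrow> galg \<Rightarrow> galg \<Rightarrow> galg \<Rightarrow> galg" where
  "ibr f P g Q = lift (\<lambda>p. ibr_left_word (Rep_fg p) P g Q) f"

lemma is_linear_ibr_left_word_P: "is_linear (\<lambda>P. ibr_left_word a P g Q)"
  unfolding ibr_left_word_def
  by (rule is_linear_lift[of "\<lambda>q P. ibr_word a P (Rep_fg q) Q", simplified]) (rule is_linear_ibr_word_P)

lemma ibr_left_word_mult_right:
  "ibr_left_word a P (g1 * g2) Q \<approx> ibr_left_word a P g1 (g2 * Q) + ibr_left_word a P g2 (Q * g1)"
  unfolding ibr_left_word_def
proof (rule lift_mult_leibniz)
  fix p q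
  have "ibr_word a P (Rep_fg (p + q)) Q \<approx> ibr_word a P (Rep_fg p @ Rep_fg q) Q"
    unfolding Rep_fg_plus by (rule cong_comm_sym, rule ibr_word_reduce_right)
  then show "ibr_word a P (Rep_fg (p + q)) Q \<approx> ibr_word a P (Rep_fg p) (Poly_Mapping.single q 1 * Q)
      + ibr_word a P (Rep_fg q) (Q * Poly_Mapping.single p 1)"
    by (simp add: ibr_word_append_right mono_Rep_fg)
qed (rule is_linear_ibr_word_Q)+

lemma ibr_mult_left: "ibr (f1 * f2) P g Q \<approx> ibr f1 (f2 * P) g Q + ibr f2 (P * f1) g Q"
  unfolding ibr_def
proof (rule lift_mult_leibniz)
  fix p q
  show "ibr_left_word (Rep_fg (p + q)) P g Q \<approx> ibr_left_word (Rep_fg p) (Poly_Mapping.single q 1 * P) g Q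
      + ibr_left_word (Rep_fg q) (P * Poly_Mapping.single p 1) g Q"
    by (simp add: ibr_left_word_def Rep_fg_plus ibr_word_reduce_left ibr_word_append_left
        lift_fun_add mono_Rep_fg)
qed (rule is_linear_ibr_left_word_P)+

lemma ibr_mult_right: "ibr f P (g1 * g2) Q \<approx> ibr f P g1 (g2 * Q) + ibr f P g2 (Q * g1)"
  unfolding ibr_def lift_fun_add[symmetric] by (rule lift_cong_comm) (rule ibr_left_word_mult_right)

section \<open>The Kontsevich bracket modulo commutators\<close>

lemma muK_add: "muK (T1 + T2) = muK T1 + muK T2"
  unfolding muK_def by (rule setsum_keys_plus_distrib) (simp_all add: single_add)

lemma muK_zero [simp]: "muK 0 = 0"
  by (simp add: muK_def)

lemma muK_sum: "muK (sum F I) = (\<Sum>i\<in>I. muK (F i))"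
  by (induction I rule: infinite_finite_induct) (auto simp: muK_add)

lemma muK_single: "muK (Poly_Mapping.single pq c) = Poly_Mapping.single (fst pq + snd pq) c"
  by (cases "c = 0") (simp_all add: muK_def)

lemma muK_dbr_word: "muK (dbr_word s a b) \<approx> scalar s * ibr_word a 1 b 1"
  unfolding dbr_word_def ibr_word_def muK_sum sum_distrib_left
proof (intro cong_comm_sum)
  fix i j
  obtain c x y where l: "lbr (a ! i) (b ! j) = (c, x, y)" by (cases "lbr (a ! i) (b ! j)")
  let ?L = "mono (x @ drop (Suc i) a) * mono (take i a @ y @ drop (Suc j) b)"
  have "Poly_Mapping.single (fgw (take j b @ x @ drop (Suc i) a) + fgw (take i a @ y @ drop (Suc j) b)) (s * c)
      = scalar s * (scalar c * (mono (take j b) * ?L))"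
    by (simp add: mono_def fgw_append mult_single add.assoc)
  also have "\<dots> \<approx> scalar s * (scalar c * (?L * mono (take j b)))"
    by (intro cong_comm_scalar mult_cong_comm_commute)
  finally show "muK (case lbr (a ! i) (b ! j) of (c, x, y) \<Rightarrow>
      Poly_Mapping.single (fgw (take j b @ x @ drop (Suc i) a), fgw (take i a @ y @ drop (Suc j) b)) (s * c))
      \<approx> scalar s * ibr_term a i b j 1 1"
    using l by (simp add: ibr_term_def muK_single mult.assoc)
qed

lemma brK_cong_comm_ibr: "brK f g \<approx> ibr f 1 g 1"
proof -
  have "brK f g = (\<Sum>p\<in>Poly_Mapping.keys f. \<Sum>q\<in>Poly_Mapping.keys g.
          muK (dbr_word (Poly_Mapping.lookup f p * Poly_Mapping.lookup g q) (Rep_fg p) (Rep_fg q)))"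
    by (simp add: brK_def dbrK_def muK_sum)
  also have "\<dots> \<approx> (\<Sum>p\<in>Poly_Mapping.keys f. \<Sum>q\<in>Poly_Mapping.keys g.
          scalar (Poly_Mapping.lookup f p * Poly_Mapping.lookup g q) * ibr_word (Rep_fg p) 1 (Rep_fg q) 1)"
    by (intro cong_comm_sum muK_dbr_word)
  also have "\<dots> = ibr f 1 g 1"
    by (simp add: ibr_def ibr_left_word_def lift_def sum_distrib_left scalar_mult)
  finally show ?thesis .
qed

text \<open>Rotating the word \<open>b\<^sub><\<^sub>j\<close> to the front makes the terms for \<open>h\<close> combine exactly.\<close>

definition ibr_term_rot :: "letter list \<Rightarrow> nat \<Rightarrow> letter list \<Rightarrow> nat \<Rightarrow> galg \<Rightarrow> galg \<Rightarrow> galg" where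
  "ibr_term_rot a i b j P Q = (case lbr (a ! i) (b ! j) of (s, x, y) \<Rightarrow>
     scalar s * mono (take j b @ x @ drop (Suc i) a) * P * mono (take i a @ y @ drop (Suc j) b) * Q)"

definition ibr_word_rot :: "letter list \<Rightarrow> galg \<Rightarrow> letter list \<Rightarrow> galg \<Rightarrow> galg" where
  "ibr_word_rot a P b Q = (\<Sum>i<length a. \<Sum>j<length b. ibr_term_rot a i b j P Q)"

lemma ibr_word_cong_comm_rot: "ibr_word a P b Q \<approx> ibr_word_rot a P b Q"
  unfolding ibr_word_def ibr_word_rot_def
proof (intro cong_comm_sum)
  fix i j
  obtain s x y where l: "lbr (a ! i) (b ! j) = (s, x, y)" by (cases "lbr (a ! i) (b ! j)")
  let ?T = "mono (x @ drop (Suc i) a) * P * mono (take i a @ y @ drop (Suc j) b) * Q"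
  show "ibr_term a i b j P Q \<approx> ibr_term_rot a i b j P Q"
    using l cong_comm_scalar[OF mult_cong_comm_commute[of ?T "mono (take j b)"], of s]
    by (simp add: ibr_term_def ibr_term_rot_def mono_append mult.assoc)
qed

lemma ibr_hK_hK: "ibr hK P hK Q =
   ibr_word [U] P [U] Q + ibr_word [U] P [V] Q + ibr_word [U] P [Ui] Q + ibr_word [U] P [Vi] Q + ibr_word [U] P [Ui, Vi] Q +
   ibr_word [V] P [U] Q + ibr_word [V] P [V] Q + ibr_word [V] P [Ui] Q + ibr_word [V] P [Vi] Q + ibr_word [V] P [Ui, Vi] Q +
   ibr_word [Ui] P [U] Q + ibr_word [Ui] P [V] Q + ibr_word [Ui] P [Ui] Q + ibr_word [Ui] P [Vi] Q + ibr_word [Ui] P [Ui, Vi] Q +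
   ibr_word [Vi] P [U] Q + ibr_word [Vi] P [V] Q + ibr_word [Vi] P [Ui] Q + ibr_word [Vi] P [Vi] Q + ibr_word [Vi] P [Ui, Vi] Q +
   ibr_word [Ui, Vi] P [U] Q + ibr_word [Ui, Vi] P [V] Q + ibr_word [Ui, Vi] P [Ui] Q + ibr_word [Ui, Vi] P [Vi] Q + ibr_word [Ui, Vi] P [Ui, Vi] Q"
  by (simp add: ibr_def ibr_left_word_def hK_def mono_def lift_add lift_single Rep_fg_fgw reduce_def add.assoc)

definition R_hK :: galg where
  "R_hK = mono [Ui] + mono [Vi] - mono [Ui, Vi] + mono [Ui, Vi, Ui] + mono [Ui, Vi, Ui, Vi]
     + mono [Vi, Ui] + mono [Vi, Ui, Vi]"

definition W_hK :: galg where
  "W_hK = mono [V] + mono [Ui] + mono [Ui, Vi]"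

lemma ibr_word_rot_hK_hK:
  "ibr_word_rot [U] P [U] Q + ibr_word_rot [U] P [V] Q + ibr_word_rot [U] P [Ui] Q + ibr_word_rot [U] P [Vi] Q + ibr_word_rot [U] P [Ui, Vi] Q +
   ibr_word_rot [V] P [U] Q + ibr_word_rot [V] P [V] Q + ibr_word_rot [V] P [Ui] Q + ibr_word_rot [V] P [Vi] Q + ibr_word_rot [V] P [Ui, Vi] Q +
   ibr_word_rot [Ui] P [U] Q + ibr_word_rot [Ui] P [V] Q + ibr_word_rot [Ui] P [Ui] Q + ibr_word_rot [Ui] P [Vi] Q + ibr_word_rot [Ui] P [Ui, Vi] Q +
   ibr_word_rot [Vi] P [U] Q + ibr_word_rot [Vi] P [V] Q + ibr_word_rot [Vi] P [Ui] Q + ibr_word_rot [Vi] P [Vi] Q + ibr_word_rot [Vi] P [Ui, Vi] Q +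
   ibr_word_rot [Ui, Vi] P [U] Q + ibr_word_rot [Ui, Vi] P [V] Q + ibr_word_rot [Ui, Vi] P [Ui] Q + ibr_word_rot [Ui, Vi] P [Vi] Q + ibr_word_rot [Ui, Vi] P [Ui, Vi] Q
   = - (hK * P * mono [Ui, Vi] * Q) + P * R_hK * Q + (mono [U, V] - mono [V, U]) * P * Q"
  by (simp add: ibr_word_rot_def ibr_term_rot_def hK_def R_hK_def mono_simps algebra_simps)

lemma R_hK_commutator: "R_hK + mono [U, V] - mono [V, U] - mono [Ui, Vi] * hK = hK * W_hK - W_hK * hK"
  by (simp add: hK_def R_hK_def W_hK_def mono_simps algebra_simps)

lemma ibr_hK_power_hK_power: "ibr hK (hK ^ k) hK (hK ^ m) \<in> comm_space"
proof -
  let ?P = "hK ^ k" and ?Q = "hK ^ m" and ?K = "hK ^ (k + m)" and ?w = "mono [Ui, Vi]"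
  have "ibr hK ?P hK ?Q \<approx> - (hK * ?P * ?w * ?Q) + ?P * R_hK * ?Q + (mono [U, V] - mono [V, U]) * ?P * ?Q"
    unfolding ibr_hK_hK ibr_word_rot_hK_hK[symmetric] by (intro cong_comm_add ibr_word_cong_comm_rot)
  also have "\<dots> \<approx> - (?w * hK * ?K) + R_hK * ?K + (mono [U, V] - mono [V, U]) * ?K"
  proof (intro cong_comm_add cong_comm_uminus)
    have "hK * ?P * ?w * ?Q = (hK * ?P) * (?w * ?Q)" by (simp add: mult.assoc)
    also have "\<dots> \<approx> (?w * ?Q) * (hK * ?P)" by (rule mult_cong_comm_commute)
    also have "(?w * ?Q) * (hK * ?P) = ?w * hK * ?K"
      by (simp add: mult.assoc flip: power_Suc power_add) (simp add: add.commute)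
    finally show "hK * ?P * ?w * ?Q \<approx> ?w * hK * ?K" .
    have "?P * R_hK * ?Q = ?P * (R_hK * ?Q)" by (simp add: mult.assoc)
    also have "\<dots> \<approx> (R_hK * ?Q) * ?P" by (rule mult_cong_comm_commute)
    also have "(R_hK * ?Q) * ?P = R_hK * ?K" by (simp add: mult.assoc flip: power_add) (simp add: add.commute)
    finally show "?P * R_hK * ?Q \<approx> R_hK * ?K" .
  qed (simp add: mult.assoc power_add)
  also have "- (?w * hK * ?K) + R_hK * ?K + (mono [U, V] - mono [V, U]) * ?K
      = hK * (W_hK * ?K) - (W_hK * ?K) * hK"
    using arg_cong[OF R_hK_commutator, of "\<lambda>X. X * ?K"]
    by (simp add: algebra_simps power_commutes)
  finally show ?thesis by (rule comm_space_cong_comm) (rule comm_space.comm)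
qed

theorem mainTheorem2:
  fixes N M :: nat
  assumes "N > 0" and "M > 0"
  shows "brK (hK ^ N) (hK ^ M) \<in> comm_space"
proof -
  have "ibr hK (hK ^ k) (hK ^ M) (hK ^ m) \<in> comm_space" for k m
    using leibniz_power_comm_space[where F = "\<lambda>g Q. ibr hK (hK ^ k) g Q"]
      ibr_mult_right ibr_hK_power_hK_power assms(2) by blast
  then have "ibr (hK ^ N) (hK ^ 0) (hK ^ M) (hK ^ 0) \<in> comm_space"
    using leibniz_power_comm_space[where F = "\<lambda>f P. ibr f P (hK ^ M) (hK ^ 0)"]
      ibr_mult_left assms(1) by blast
  then show ?thesis
    by (simp add: comm_space_cong_comm[OF brK_cong_comm_ibr])
qed

end
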